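(* Let $n\ge 4$ and consider the Markov chain on $\{0,1,\dots,n-1\}$ with $n\times n$ transition probability matrix $\mathbf P=(P_{ij})$ given by: $P_{00}=5/6$, $P_{01}=1/6$; $P_{10}=5/6$, $P_{12}=1/6$; for $2\le i\le n-3$: $P_{i0}=2/3$, $P_{i,i-1}=1/6$, $P_{i,i+1}=1/6$; $P_{n-2,0}=16/21$, $P_{n-2,n-3}=1/6$, $P_{n-2,n-1}=1/14$; $P_{n-1,0}=1/3$, $P_{n-1,n-2}=1/6$, $P_{n-1,n-1}=1/2$; all other entries $0$. Then the steady state probability vector $\vec\pi=(\pi_0,\dots,\pi_{n-1})$ (the unique probability vector with $\vec\pi=\vec\pi\mathbf P$) is $$\vec\pi=\left(\frac{c_n}{\sum_{l=1}^n c_l},\frac{c_{n-1}}{\sum_{l=1}^n c_l},\dots,\frac{c_1}{\sum_{l=1}^n c_l}\right),$$ i.e. $\pi_i=c_{n-i}/\sum_{l=1}^n c_l$ for $i=0,\dots,n-1$.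
   Context: The cobalancing numbers are $b_0=0$, $b_1=0$, $b_{m+1}=6b_m-b_{m-1}+2$ (so $b_2=2$, $b_3=14$). The Lucas-cobalancing numbers are $c_m=\sqrt{8b_m^2+8b_m+1}$ for $m\ge1$; thus $c_1=1$, $c_2=7$, $c_3=41$, and $c_{m+1}=6c_m-c_{m-1}$. *)

theory Defs
  imports Complex_Main
begin

fun cobal :: "nat \<Rightarrow> int" where
  "cobal 0 = 0"
| "cobal (Suc 0) = 0"
| "cobal (Suc (Suc m)) = 6 * cobal (Suc m) - cobal m + 2"

definition lucas_cobal :: "nat \<Rightarrow> real" where
  "lucas_cobal m = sqrt (8 * (real_of_int (cobal m))^2 + 8 * real_of_int (cobal m) + 1)"

definition Pmat :: "nat \<Rightarrow> nat \<Rightarrow> nat \<Rightarrow> real" where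
  "Pmat n i j =
    (if i = 0 then (if j = 0 then 5/6 else if j = 1 then 1/6 else 0)
     else if i = 1 then (if j = 0 then 5/6 else if j = 2 then 1/6 else 0)
     else if 2 \<le> i \<and> i \<le> n - 3 then
       (if j = 0 then 2/3 else if j = i - 1 then 1/6 else if j = i + 1 then 1/6 else 0)
     else if i = n - 2 then
       (if j = 0 then 16/21 else if j = n - 3 then 1/6 else if j = n - 1 then 1/14 else 0)
     else if i = n - 1 then
       (if j = 0 then 1/3 else if j = n - 2 then 1/6 else if j = n - 1 then 1/2 else 0)
     else 0)"

definition stationary_prob :: "nat \<Rightarrow> (nat \<Rightarrow> nat \<Rightarrow> real) \<Rightarrow> (nat \<Rightarrow> real) \<Rightarrow> bool" where
  "stationary_prob n P \<pi> \<longleftrightarrow>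
     (\<forall>i<n. 0 \<le> \<pi> i) \<and> (\<Sum>i<n. \<pi> i) = 1 \<and>
     (\<forall>j<n. \<pi> j = (\<Sum>i<n. \<pi> i * P i j))"

end

theory Submission
  imports Defs
begin

text \<open>
  In every column j \<ge> 1 the matrix has only the two neighbouring entries (plus the diagonal
  entry in the last column), so the balance equations read backwards from state n - 1 say
  \<pi>(n-2) = 7 \<pi>(n-1) and \<pi>(j-1) = 6 \<pi>(j) - \<pi>(j+1): \<pi>(n-k) is \<pi>(n-1) times the k-th term of
  the recurrence c 1 = 1, c 2 = 7, c (k+2) = 6 c (k+1) - c k. Since the rows sum to 1, the
  balance equation in column 0 follows from the others, and normalisation fixes \<pi>(n-1).
  Finally the pairs (b m, c m) evolve by b' = 3b + c + 1, c' = 8b + 3c + 4, a map preserving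
  c^2 - 8b^2 - 8b; hence c m = sqrt (8 b m^2 + 8 b m + 1).
\<close>

text \<open>The value at 0 continues the recurrence backwards; it differs from \<^term>\<open>lucas_cobal 0\<close> = 1.\<close>

fun lucas_cobal_rec :: "nat \<Rightarrow> int" where
  "lucas_cobal_rec 0 = -1"
| "lucas_cobal_rec (Suc 0) = 1"
| "lucas_cobal_rec (Suc (Suc m)) = 6 * lucas_cobal_rec (Suc m) - lucas_cobal_rec m"

lemma cobal_lucas_cobal_rec_Suc:
  "cobal (Suc m) = 3 * cobal m + lucas_cobal_rec m + 1 \<and>
   lucas_cobal_rec (Suc m) = 8 * cobal m + 3 * lucas_cobal_rec m + 4"
  by (induction m rule: lucas_cobal_rec.induct) simp_all

lemma lucas_cobal_rec_square:
  "(lucas_cobal_rec m)\<^sup>2 = 8 * (cobal m)\<^sup>2 + 8 * cobal m + 1"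
proof (induction m)
  case (Suc m)
  then show ?case
    using cobal_lucas_cobal_rec_Suc[of m] by (simp add: power2_eq_square algebra_simps)
qed simp

lemma lucas_cobal_rec_pos: "m \<ge> 1 \<Longrightarrow> lucas_cobal_rec m > 0"
proof -
  have "0 < lucas_cobal_rec (Suc k) \<and> lucas_cobal_rec (Suc k) \<le> lucas_cobal_rec (Suc (Suc k))" for k
    by (induction k) auto
  then show "m \<ge> 1 \<Longrightarrow> lucas_cobal_rec m > 0"
    by (cases m) auto
qed

lemma lucas_cobal_eq_rec:
  assumes "m \<ge> 1"
  shows "lucas_cobal m = of_int (lucas_cobal_rec m)"
proof -
  have "8 * (real_of_int (cobal m))\<^sup>2 + 8 * real_of_int (cobal m) + 1 = (of_int (lucas_cobal_rec m))\<^sup>2"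
    using arg_cong[OF lucas_cobal_rec_square[of m], of real_of_int] by simp
  then show ?thesis
    using lucas_cobal_rec_pos[OF assms] by (simp add: lucas_cobal_def)
qed

lemma recurrence_solution_eq_lucas_cobal_rec:
  fixes y :: "nat \<Rightarrow> real" and t :: real
  assumes "y 1 = t" and "y 2 = 7 * t"
    and "\<And>k. 1 \<le> k \<Longrightarrow> k + 2 \<le> N \<Longrightarrow> y (k + 2) = 6 * y (k + 1) - y k"
  shows "1 \<le> k \<Longrightarrow> k \<le> N \<Longrightarrow> y k = of_int (lucas_cobal_rec k) * t"
proof (induction k rule: lucas_cobal_rec.induct)
  case (3 m)
  show ?case
  proof (cases m)
    case 0
    then show ?thesis using assms(2) by (simp add: numeral_2_eq_2)
  next
    case (Suc _)
    then show ?thesis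
      using 3 assms(3)[of m] by (simp add: algebra_simps)
  qed
qed (use assms(1) in simp_all)

lemma Pmat_column_ge1:
  assumes "n \<ge> 4" "i < n" "1 \<le> j" "j < n"
  shows "Pmat n i j = (if i + 1 = j then (if j = n - 1 then 1/14 else 1/6) else 0)
     + (if i = j + 1 then 1/6 else 0) + (if i = j \<and> j = n - 1 then 1/2 else 0)"
proof -
  obtain m where m: "n = m + 4" using assms(1) by (metis add.commute le_Suc_ex)
  then consider "i = 0" | "i = 1" | "2 \<le> i \<and> i \<le> m + 1" | "i = m + 2" | "i = m + 3"
    using assms by linarith
  then show ?thesis
    using assms m by cases (auto simp: Pmat_def)
qed

lemma Pmat_row_sum:
  assumes "n \<ge> 4" "i < n"
  shows "(\<Sum>j<n. Pmat n i j) = 1"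
proof -
  obtain m where m: "n = m + 4" using assms(1) by (metis add.commute le_Suc_ex)
  have "(\<Sum>j<n. Pmat n i j) = Pmat n i 0 + (\<Sum>j\<in>{1..<n}. Pmat n i j)"
    using assms by (simp add: sum.atLeast_Suc_lessThan atLeast0LessThan[symmetric])
  also have "(\<Sum>j\<in>{1..<n}. Pmat n i j) = (\<Sum>j\<in>{1..<n}.
       (if j = i + 1 then (if j = n - 1 then 1/14 else 1/6) else 0)
     + (if j = i - 1 then (if 2 \<le> i then 1/6 else 0) else 0)
     + (if j = i then (if i = n - 1 then 1/2 else 0) else 0))"
    by (rule sum.cong) (use assms Pmat_column_ge1 in auto)
  also have "\<dots> = (if i + 1 < n then (if i + 1 = n - 1 then 1/14 else 1/6) else 0)
     + (if 2 \<le> i then 1/6 else 0) + (if i = n - 1 then 1/2 else 0)"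
    using assms by (simp add: sum.distrib; presburger)
  finally have row: "(\<Sum>j<n. Pmat n i j) = Pmat n i 0
     + (if i + 1 < n then (if i + 1 = n - 1 then 1/14 else 1/6) else 0)
     + (if 2 \<le> i then 1/6 else 0) + (if i = n - 1 then 1/2 else 0)"
    by simp
  consider "i = 0" | "i = 1" | "2 \<le> i \<and> i \<le> m + 1" | "i = m + 2" | "i = m + 3"
    using assms m by linarith
  then show ?thesis
    using assms m unfolding row by cases (auto simp: Pmat_def)
qed

lemma Pmat_column_sum:
  fixes \<pi> :: "nat \<Rightarrow> real"
  assumes "n \<ge> 4" "1 \<le> j" "j < n"
  shows "(\<Sum>i<n. \<pi> i * Pmat n i j) =
    (if j = n - 1 then \<pi> (n - 2) / 14 + \<pi> (n - 1) / 2 else \<pi> (j - 1) / 6 + \<pi> (j + 1) / 6)"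
proof -
  have "(\<Sum>i<n. \<pi> i * Pmat n i j) = (\<Sum>i<n.
       (if i = j - 1 then \<pi> i * (if j = n - 1 then 1/14 else 1/6) else 0)
     + (if i = j + 1 then \<pi> i / 6 else 0)
     + (if i = j then (if j = n - 1 then \<pi> i / 2 else 0) else 0))"
    by (rule sum.cong) (use assms Pmat_column_ge1 in auto)
  also have "\<dots> = \<pi> (j - 1) * (if j = n - 1 then 1/14 else 1/6)
     + (if j + 1 < n then \<pi> (j + 1) / 6 else 0) + (if j = n - 1 then \<pi> j / 2 else 0)"
    using assms by (simp add: sum.distrib less_imp_diff_less)
  finally show ?thesis
    using assms by (cases "j = n - 1") (auto simp: numeral_2_eq_2)
qed

lemma balance_equation_redundant:
  fixes P :: "nat \<Rightarrow> nat \<Rightarrow> real" and \<pi> :: "nat \<Rightarrow> real"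
  assumes rows: "\<And>i. i < n \<Longrightarrow> (\<Sum>j<n. P i j) = 1"
    and "j\<^sub>0 < n"
    and balance: "\<And>j. j < n \<Longrightarrow> j \<noteq> j\<^sub>0 \<Longrightarrow> \<pi> j = (\<Sum>i<n. \<pi> i * P i j)"
  shows "\<pi> j\<^sub>0 = (\<Sum>i<n. \<pi> i * P i j\<^sub>0)"
proof -
  have "(\<Sum>j<n. \<Sum>i<n. \<pi> i * P i j) = (\<Sum>i<n. \<pi> i * (\<Sum>j<n. P i j))"
    by (subst sum.swap) (simp add: sum_distrib_left)
  also have "\<dots> = (\<Sum>j<n. \<pi> j)"
    by (rule sum.cong) (simp_all add: rows)
  finally have "(\<Sum>j<n. \<pi> j - (\<Sum>i<n. \<pi> i * P i j)) = 0"
    by (simp add: sum_subtractf)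
  moreover have "(\<Sum>j<n. \<pi> j - (\<Sum>i<n. \<pi> i * P i j)) = \<pi> j\<^sub>0 - (\<Sum>i<n. \<pi> i * P i j\<^sub>0)"
    using \<open>j\<^sub>0 < n\<close> balance by (subst sum.remove[of _ j\<^sub>0]) auto
  ultimately show ?thesis
    by simp
qed

lemma Pmat_balance_iff:
  fixes \<pi> :: "nat \<Rightarrow> real"
  assumes "n \<ge> 4"
  shows "(\<forall>j. 1 \<le> j \<longrightarrow> j < n \<longrightarrow> \<pi> j = (\<Sum>i<n. \<pi> i * Pmat n i j)) \<longleftrightarrow>
         (\<exists>t. \<forall>i<n. \<pi> i = of_int (lucas_cobal_rec (n - i)) * t)"
proof
  assume balance: "\<forall>j. 1 \<le> j \<longrightarrow> j < n \<longrightarrow> \<pi> j = (\<Sum>i<n. \<pi> i * Pmat n i j)"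
  have "\<pi> (n - k) = of_int (lucas_cobal_rec k) * \<pi> (n - 1)" if "1 \<le> k" "k \<le> n" for k
  proof (rule recurrence_solution_eq_lucas_cobal_rec[where y = "\<lambda>k. \<pi> (n - k)", OF _ _ _ that])
    have "\<pi> (n - 1) = (\<Sum>i<n. \<pi> i * Pmat n i (n - 1))"
      by (rule balance[rule_format]) (use assms in auto)
    also have "\<dots> = \<pi> (n - 2) / 14 + \<pi> (n - 1) / 2"
      using Pmat_column_sum[OF assms, of "n - 1" \<pi>] assms by simp
    finally show "\<pi> (n - 2) = 7 * \<pi> (n - 1)"
      by linarith
    show "\<pi> (n - (k + 2)) = 6 * \<pi> (n - (k + 1)) - \<pi> (n - k)" if "1 \<le> k" "k + 2 \<le> n" for k
    proof -
      have j: "1 \<le> n - (k + 1)" "n - (k + 1) < n" "n - (k + 1) \<noteq> n - 1"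
        and neighbours: "n - (k + 1) - 1 = n - (k + 2)" "n - (k + 1) + 1 = n - k"
        using that by auto
      have "\<pi> (n - (k + 1)) = (\<Sum>i<n. \<pi> i * Pmat n i (n - (k + 1)))"
        by (rule balance[rule_format]) (use j in auto)
      also have "\<dots> = \<pi> (n - (k + 2)) / 6 + \<pi> (n - k) / 6"
        using Pmat_column_sum[OF assms j(1,2), of \<pi>] j(3) by (simp only: neighbours if_False)
      finally show ?thesis
        by linarith
    qed
  qed simp
  then show "\<exists>t. \<forall>i<n. \<pi> i = of_int (lucas_cobal_rec (n - i)) * t"
    by (metis diff_diff_cancel diff_le_self less_imp_le_nat zero_less_diff less_one not_le)
next
  assume "\<exists>t. \<forall>i<n. \<pi> i = of_int (lucas_cobal_rec (n - i)) * t"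
  then obtain t where \<pi>: "\<And>i. i < n \<Longrightarrow> \<pi> i = of_int (lucas_cobal_rec (n - i)) * t"
    by blast
  show "\<forall>j. 1 \<le> j \<longrightarrow> j < n \<longrightarrow> \<pi> j = (\<Sum>i<n. \<pi> i * Pmat n i j)"
  proof (intro allI impI)
    fix j assume j: "1 \<le> j" "j < n"
    show "\<pi> j = (\<Sum>i<n. \<pi> i * Pmat n i j)"
    proof (cases "j = n - 1")
      case True
      have "n - (n - 2) = Suc (Suc 0)" "n - (n - 1) = Suc 0"
        using assms by auto
      then show ?thesis
        using True assms \<pi>[of "n - 2"] \<pi>[of "n - 1"] Pmat_column_sum[OF assms j, of \<pi>]
        by (simp add: numeral_2_eq_2)
    next
      case False
      then obtain k where "n - (j + 1) = k" "n - j = Suc k" "n - (j - 1) = Suc (Suc k)"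
        using j by auto
      moreover have "j - 1 < n" "j + 1 < n"
        using j False by auto
      ultimately show ?thesis
        using False j \<pi>[of "j - 1"] \<pi>[of j] \<pi>[of "j + 1"] Pmat_column_sum[OF assms j, of \<pi>]
        by (simp add: algebra_simps)
    qed
  qed
qed

lemma proportional_probability_vector_iff:
  fixes w \<pi> :: "nat \<Rightarrow> real"
  assumes "0 < n" and w_pos: "\<And>i. i < n \<Longrightarrow> 0 < w i"
  shows "((\<forall>i<n. 0 \<le> \<pi> i) \<and> (\<Sum>i<n. \<pi> i) = 1 \<and> (\<exists>t. \<forall>i<n. \<pi> i = w i * t)) \<longleftrightarrow>
         (\<forall>i<n. \<pi> i = w i / (\<Sum>i<n. w i))"
    (is "_ \<longleftrightarrow> (\<forall>i<n. \<pi> i = w i / ?W)")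
proof -
  have "?W > 0"
    using assms by (intro sum_pos) auto
  show ?thesis
  proof
    assume "(\<forall>i<n. 0 \<le> \<pi> i) \<and> (\<Sum>i<n. \<pi> i) = 1 \<and> (\<exists>t. \<forall>i<n. \<pi> i = w i * t)"
    then obtain t where "(\<Sum>i<n. \<pi> i) = 1" and \<pi>: "\<forall>i<n. \<pi> i = w i * t"
      by blast
    moreover have "(\<Sum>i<n. \<pi> i) = ?W * t"
      using \<pi> by (simp add: sum_distrib_right)
    ultimately show "\<forall>i<n. \<pi> i = w i / ?W"
      using \<open>?W > 0\<close> by (simp add: field_simps)
  next
    assume \<pi>: "\<forall>i<n. \<pi> i = w i / ?W"
    then have "(\<Sum>i<n. \<pi> i) = ?W / ?W"
      by (simp flip: sum_divide_distrib)
    then show "(\<forall>i<n. 0 \<le> \<pi> i) \<and> (\<Sum>i<n. \<pi> i) = 1 \<and> (\<exists>t. \<forall>i<n. \<pi> i = w i * t)"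
      using \<pi> w_pos \<open>?W > 0\<close> by (auto intro!: exI[of _ "1 / ?W"] less_imp_le)
  qed
qed

theorem theorem3p3:
  fixes n :: nat
  assumes "n \<ge> 4"
  shows "\<forall>\<pi> :: nat \<Rightarrow> real. stationary_prob n (Pmat n) \<pi> \<longleftrightarrow>
           (\<forall>i<n. \<pi> i = lucas_cobal (n - i) / (\<Sum>l=1..n. lucas_cobal l))"
proof
  fix \<pi> :: "nat \<Rightarrow> real"
  define w where "w i = lucas_cobal (n - i)" for i
  have w_eq: "\<And>i. i < n \<Longrightarrow> w i = of_int (lucas_cobal_rec (n - i))"
    unfolding w_def by (simp add: lucas_cobal_eq_rec)
  have w_pos: "\<And>i. i < n \<Longrightarrow> 0 < w i"
    by (simp add: w_eq lucas_cobal_rec_pos)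
  have "(\<Sum>i<n. w i) = (\<Sum>l=1..n. lucas_cobal l)"
    unfolding w_def by (rule sum.reindex_bij_witness[where i = "\<lambda>l. n - l" and j = "\<lambda>i. n - i"]) auto
  moreover have "stationary_prob n (Pmat n) \<pi> \<longleftrightarrow>
      (\<forall>i<n. 0 \<le> \<pi> i) \<and> (\<Sum>i<n. \<pi> i) = 1 \<and>
      (\<forall>j. 1 \<le> j \<longrightarrow> j < n \<longrightarrow> \<pi> j = (\<Sum>i<n. \<pi> i * Pmat n i j))"
    unfolding stationary_prob_def
    using balance_equation_redundant[of n "Pmat n" 0 \<pi>] Pmat_row_sum[OF assms] assms
    by (metis less_one not_less)
  moreover have "\<dots> \<longleftrightarrow> (\<forall>i<n. 0 \<le> \<pi> i) \<and> (\<Sum>i<n. \<pi> i) = 1 \<and> (\<exists>t. \<forall>i<n. \<pi> i = w i * t)"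
    using Pmat_balance_iff[OF assms, of \<pi>] w_eq by auto
  moreover have "\<dots> \<longleftrightarrow> (\<forall>i<n. \<pi> i = w i / (\<Sum>i<n. w i))"
    by (rule proportional_probability_vector_iff) (use assms w_pos in auto)
  ultimately show "stationary_prob n (Pmat n) \<pi> \<longleftrightarrow>
      (\<forall>i<n. \<pi> i = lucas_cobal (n - i) / (\<Sum>l=1..n. lucas_cobal l))"
    by (simp add: w_def)
qed

end
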